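(* Let $n\ge1$, $0\le k\le n$, $D^\star\in(0,1)$, $\varepsilon\in(0,D^\star)$ and $\rho=\varepsilon(D^\star-\varepsilon)/(2n)$. Consider the set $\mathcal F_k$ of $\lambda\in\mathcal L_n$ such that, with $t=t_{\mathrm{wf}}(\lambda,D^\star)$, we have $\lambda_i\ge t+\rho$ for all $i\le k$ and $0\le\lambda_i\le t-\rho$ for all $i>k$. Then every maximizer $\lambda^\star$ of $G(\lambda)=\mathbf R_{\mathrm{rc}}(\lambda,D^\star)-\mathbf R_{\mathrm{wf}}(\lambda,D^\star)$ over $\mathcal F_k$ satisfies $\lambda^\star_{k+1}=\lambda^\star_{k+2}=\dots=\lambda^\star_n$.
   Context: Logarithms are base 2. $\mathcal L_n=\{\lambda\in\mathbb R^n_{\ge0}:\sum_i\lambda_i=n\}$. For $\lambda\in\mathcal L_n$ and $T,t>0$: $D_{\mathrm{rc}}(\lambda,T)=\frac1n\sum_i\frac{\lambda_i}{1+\lambda_iT}$, $R_{\mathrm{rc}}(\lambda,T)=\frac1{2n}\sum_i\log(1+\lambda_iT)$, $D_{\mathrm{wf}}(\lambda,t)=\frac1n\sum_i\min\{\lambda_i,t\}$, $R_{\mathrm{wf}}(\lambda,t)=\frac1{2n}\sum_i\max\{0,\log(\lambda_i/t)\}$. For $D\in(0,1)$, $T_{\mathrm{rc}}(\lambda,D)$ is the unique $T>0$ with $D_{\mathrm{rc}}(\lambda,T)=D$, and $t_{\mathrm{wf}}(\lambda,D)$ is the unique $t\in(0,\max_i\lambda_i)$ with $D_{\mathrm{wf}}(\lambda,t)=D$.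 Set $\mathbf R_{\mathrm{rc}}(\lambda,D)=R_{\mathrm{rc}}(\lambda,T_{\mathrm{rc}}(\lambda,D))$ and $\mathbf R_{\mathrm{wf}}(\lambda,D)=R_{\mathrm{wf}}(\lambda,t_{\mathrm{wf}}(\lambda,D))$. *)

theory Defs
  imports Complex_Main
begin

text \<open>Vectors in R^n are represented as functions nat => real, indexed by {1..n}.
  Logarithms are base 2.\<close>

definition Lset :: "nat \<Rightarrow> (nat \<Rightarrow> real) set" where
  "Lset n = {lam. (\<forall>i\<in>{1..n}. lam i \<ge> 0) \<and> (\<Sum>i=1..n. lam i) = real n}"

definition D_rc :: "nat \<Rightarrow> (nat \<Rightarrow> real) \<Rightarrow> real \<Rightarrow> real" where
  "D_rc n lam T = (1 / real n) * (\<Sum>i=1..n. lam i / (1 + lam i * T))"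

definition R_rc :: "nat \<Rightarrow> (nat \<Rightarrow> real) \<Rightarrow> real \<Rightarrow> real" where
  "R_rc n lam T = (1 / (2 * real n)) * (\<Sum>i=1..n. log 2 (1 + lam i * T))"

definition D_wf :: "nat \<Rightarrow> (nat \<Rightarrow> real) \<Rightarrow> real \<Rightarrow> real" where
  "D_wf n lam t = (1 / real n) * (\<Sum>i=1..n. min (lam i) t)"

definition R_wf :: "nat \<Rightarrow> (nat \<Rightarrow> real) \<Rightarrow> real \<Rightarrow> real" where
  "R_wf n lam t = (1 / (2 * real n)) * (\<Sum>i=1..n. max 0 (log 2 (lam i / t)))"

definition T_rc :: "nat \<Rightarrow> (nat \<Rightarrow> real) \<Rightarrow> real \<Rightarrow> real" where
  "T_rc n lam D = (THE T. T > 0 \<and> D_rc n lam T = D)"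

definition t_wf :: "nat \<Rightarrow> (nat \<Rightarrow> real) \<Rightarrow> real \<Rightarrow> real" where
  "t_wf n lam D = (THE t. 0 < t \<and> t < Max (lam ` {1..n}) \<and> D_wf n lam t = D)"

definition RR_rc :: "nat \<Rightarrow> (nat \<Rightarrow> real) \<Rightarrow> real \<Rightarrow> real" where
  "RR_rc n lam D = R_rc n lam (T_rc n lam D)"

definition RR_wf :: "nat \<Rightarrow> (nat \<Rightarrow> real) \<Rightarrow> real \<Rightarrow> real" where
  "RR_wf n lam D = R_wf n lam (t_wf n lam D)"

definition Gobj :: "nat \<Rightarrow> real \<Rightarrow> (nat \<Rightarrow> real) \<Rightarrow> real" where
  "Gobj n D lam = RR_rc n lam D - RR_wf n lam D"

definition Fset :: "nat \<Rightarrow> nat \<Rightarrow> real \<Rightarrow> real \<Rightarrow> (nat \<Rightarrow> real) set" where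
  "Fset n k D rho = {lam. lam \<in> Lset n \<and>
     (\<forall>i\<in>{1..k}. lam i \<ge> t_wf n lam D + rho) \<and>
     (\<forall>i\<in>{k+1..n}. 0 \<le> lam i \<and> lam i \<le> t_wf n lam D - rho)}"

end

theory Submission
  imports Defs
begin

text \<open>Replace the entries of \<open>lam\<close> below the water level, \<open>lam (k+1), ..., lam n\<close>, by their
  mean. The total stays \<open>n\<close>, and since each of these entries contributes \<open>lam i\<close> to \<open>D_wf\<close>
  and \<open>0\<close> to \<open>R_wf\<close>, neither the water level \<open>t_wf\<close> nor \<open>RR_wf\<close> changes; in particular
  the averaged vector is still feasible. The test channel distortion \<open>x / (1 + x T)\<close> and rate
  \<open>log (1 + x T)\<close> are concave in \<open>x\<close>, the latter strictly, so averaging raises \<open>D_rc\<close> at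
  the old level \<open>T = T_rc\<close>, which can only raise \<open>T_rc\<close>, and strictly raises \<open>R_rc\<close>.
  So \<open>Gobj\<close> strictly increases unless the tail was already constant.\<close>

definition mean_on :: "'a set \<Rightarrow> ('a \<Rightarrow> real) \<Rightarrow> real" where
  "mean_on S x = (\<Sum>i\<in>S. x i) / real (card S)"

definition flatten_on :: "'a set \<Rightarrow> ('a \<Rightarrow> real) \<Rightarrow> 'a \<Rightarrow> real" where
  "flatten_on S x i = (if i \<in> S then mean_on S x else x i)"

lemma sum_diff_mean_on_eq_0:
  assumes "finite S"
  shows "(\<Sum>i\<in>S. x i - mean_on S x) = 0"
  using assms by (cases "S = {}") (simp_all add: mean_on_def sum_subtractf)

lemma mean_on_le:
  assumes "finite S" "S \<noteq> {}" "\<And>i. i \<in> S \<Longrightarrow> x i \<le> b"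
  shows "mean_on S x \<le> b"
proof -
  have "(\<Sum>i\<in>S. x i) \<le> real (card S) * b"
    using assms(3) sum_bounded_above[of S x b] by simp
  then show ?thesis
    using assms(1,2) by (simp add: mean_on_def divide_le_eq mult.commute)
qed

lemma mean_on_ge:
  assumes "finite S" "S \<noteq> {}" "\<And>i. i \<in> S \<Longrightarrow> b \<le> x i"
  shows "b \<le> mean_on S x"
proof -
  have "real (card S) * b \<le> (\<Sum>i\<in>S. x i)"
    using assms(3) sum_bounded_below[of S b x] by simp
  then show ?thesis
    using assms(1,2) by (simp add: mean_on_def le_divide_eq mult.commute)
qed

text \<open>The slope \<open>c\<close> is free because the deviations from the mean sum to zero; taking the
  tangent slope of \<open>f\<close> at the mean, concavity of \<open>f\<close> makes every summand nonnegative.\<close>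
lemma sum_flatten_on_diff:
  fixes f :: "real \<Rightarrow> real"
  assumes "finite I" "S \<subseteq> I"
  shows "(\<Sum>i\<in>I. f (flatten_on S x i)) - (\<Sum>i\<in>I. f (x i))
    = (\<Sum>i\<in>S. f (mean_on S x) + c * (x i - mean_on S x) - f (x i))"
proof -
  have S: "finite S" using assms finite_subset by blast
  have "(\<Sum>i\<in>I. f (flatten_on S x i) - f (x i)) = (\<Sum>i\<in>S. f (mean_on S x) - f (x i))"
    using sum.mono_neutral_cong_right[OF assms(1,2), of "\<lambda>i. f (flatten_on S x i) - f (x i)"]
    by (simp add: flatten_on_def)
  also have "\<dots> = (\<Sum>i\<in>S. f (mean_on S x) - f (x i)) + c * (\<Sum>i\<in>S. x i - mean_on S x)"
    using sum_diff_mean_on_eq_0[OF S] by simp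
  finally show ?thesis
    by (simp add: sum_distrib_left sum_subtractf sum.distrib algebra_simps)
qed

lemma sum_flatten_on:
  assumes "finite I" "S \<subseteq> I"
  shows "(\<Sum>i\<in>I. flatten_on S x i) = (\<Sum>i\<in>I. x i)"
  using sum_flatten_on_diff[OF assms, of "\<lambda>y. y" x 1] sum_diff_mean_on_eq_0[of S x]
    finite_subset[OF assms(2,1)] by simp

lemma frac_le_tangent:
  fixes x a T :: real
  assumes "0 \<le> x" "0 \<le> a" "0 < T"
  shows "x / (1 + x * T) \<le> a / (1 + a * T) + 1 / (1 + a * T)\<^sup>2 * (x - a)"
proof -
  have pos: "0 < 1 + x * T" "0 < 1 + a * T"
    using assms by (auto intro: add_pos_nonneg)
  have "a / (1 + a * T) + 1 / (1 + a * T)\<^sup>2 * (x - a) - x / (1 + x * T)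
      = (x - a)\<^sup>2 * T / ((1 + x * T) * (1 + a * T)\<^sup>2)"
    using pos by (simp add: divide_simps) (simp add: power2_eq_square algebra_simps)
  moreover have "0 \<le> (x - a)\<^sup>2 * T / ((1 + x * T) * (1 + a * T)\<^sup>2)"
    using pos assms by simp
  ultimately show ?thesis by linarith
qed

lemma ln_less_minus_one:
  fixes y :: real
  assumes "0 < y" "y \<noteq> 1"
  shows "ln y < y - 1"
  using ln_le_minus_one[OF assms(1)] ln_eq_minus_one[OF assms(1)] assms(2) by fastforce

lemma log_less_tangent:
  fixes x a T :: real
  assumes "0 \<le> x" "0 \<le> a" "0 < T" "x \<noteq> a"
  shows "log 2 (1 + x * T) < log 2 (1 + a * T) + T / ((1 + a * T) * ln 2) * (x - a)"
proof -
  define y where "y = (1 + x * T) / (1 + a * T)"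
  have pos: "0 < 1 + x * T" "0 < 1 + a * T"
    using assms by (auto intro: add_pos_nonneg)
  have "0 < y" "y \<noteq> 1"
    using pos assms by (simp_all add: y_def field_simps)
  then have "ln y / ln 2 < (y - 1) / ln 2"
    using ln_less_minus_one by (simp add: divide_strict_right_mono)
  moreover have "log 2 (1 + x * T) - log 2 (1 + a * T) = ln y / ln 2"
    using pos by (simp add: y_def log_def ln_div diff_divide_distrib)
  moreover have "(y - 1) / ln 2 = T / ((1 + a * T) * ln 2) * (x - a)"
    using pos by (simp add: y_def field_simps)
  ultimately show ?thesis by linarith
qed

lemma log_le_tangent:
  fixes x a T :: real
  assumes "0 \<le> x" "0 \<le> a" "0 < T"
  shows "log 2 (1 + x * T) \<le> log 2 (1 + a * T) + T / ((1 + a * T) * ln 2) * (x - a)"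
  using log_less_tangent[OF assms] by (cases "x = a") force+

lemma Lset_nonneg: "lam \<in> Lset n \<Longrightarrow> i \<in> {1..n} \<Longrightarrow> 0 \<le> lam i"
  by (simp add: Lset_def)

lemma Lset_le:
  assumes "lam \<in> Lset n" "i \<in> {1..n}"
  shows "lam i \<le> real n"
proof -
  have "lam i \<le> (\<Sum>j=1..n. lam j)"
    using assms by (intro member_le_sum) (auto simp: Lset_def)
  then show ?thesis
    using assms by (simp add: Lset_def)
qed

lemma Lset_ex_pos:
  assumes "lam \<in> Lset n" "n \<ge> 1"
  obtains i where "i \<in> {1..n}" "0 < lam i"
proof -
  have "\<exists>i\<in>{1..n}. lam i \<noteq> 0"
  proof (rule ccontr)
    assume "\<not> ?thesis"
    then have "(\<Sum>i=1..n. lam i) = 0" by simp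
    then show False using assms by (simp add: Lset_def)
  qed
  then show ?thesis
    using that Lset_nonneg[OF assms(1)] by force
qed

lemma flatten_on_Lset:
  assumes "lam \<in> Lset n" "S \<subseteq> {1..n}"
  shows "flatten_on S lam \<in> Lset n"
proof -
  have "0 \<le> mean_on S lam" if "S \<noteq> {}"
    using that assms Lset_nonneg[OF assms(1)] by (intro mean_on_ge) (auto intro: finite_subset)
  then have "0 \<le> flatten_on S lam i" if "i \<in> {1..n}" for i
    using that Lset_nonneg[OF assms(1)] by (auto simp: flatten_on_def)
  moreover have "(\<Sum>i=1..n. flatten_on S lam i) = real n"
    using sum_flatten_on[OF _ assms(2)] assms(1) by (simp add: Lset_def)
  ultimately show ?thesis by (simp add: Lset_def)
qed

lemma D_wf_eq_1:
  assumes "lam \<in> Lset n" "n \<ge> 1" "Max (lam ` {1..n}) \<le> t"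
  shows "D_wf n lam t = 1"
proof -
  have "min (lam i) t = lam i" if "i \<in> {1..n}" for i
    using that assms(3) Max_ge[of "lam ` {1..n}" "lam i"] by simp
  then have "(\<Sum>i=1..n. min (lam i) t) = real n"
    using assms(1) by (simp add: Lset_def)
  then show ?thesis
    using assms(2) by (simp add: D_wf_def)
qed

lemma D_wf_strict_mono:
  assumes "n \<ge> 1" "t < t'" "t < Max (lam ` {1..n})"
  shows "D_wf n lam t < D_wf n lam t'"
proof -
  have "Max (lam ` {1..n}) \<in> lam ` {1..n}"
    using assms(1) by (intro Max_in) auto
  then obtain i0 where i0: "i0 \<in> {1..n}" "lam i0 = Max (lam ` {1..n})"
    by auto
  have "min (lam i0) t < min (lam i0) t'"
    using assms(2,3) i0(2) by simp
  then have "(\<Sum>i=1..n. min (lam i) t) < (\<Sum>i=1..n. min (lam i) t')"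
    using assms(2) i0(1) by (intro sum_strict_mono_ex1) auto
  then show ?thesis
    using assms(1) by (simp add: D_wf_def divide_strict_right_mono)
qed

lemma t_wf_eqI:
  assumes "lam \<in> Lset n" "n \<ge> 1" "D < 1" "0 < t" "D_wf n lam t = D"
  shows "t_wf n lam D = t"
proof -
  have below_Max: "t < Max (lam ` {1..n})"
    using D_wf_eq_1[OF assms(1,2), of t] assms(3,5) by force
  show ?thesis
    unfolding t_wf_def
  proof (rule the_equality)
    fix t' assume t': "0 < t' \<and> t' < Max (lam ` {1..n}) \<and> D_wf n lam t' = D"
    show "t' = t"
      using D_wf_strict_mono[OF assms(2), of t t' lam] D_wf_strict_mono[OF assms(2), of t' t lam]
        t' below_Max assms(5) by (cases t t' rule: linorder_cases) auto
  qed (use assms below_Max in auto)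
qed

lemma t_wf_spec:
  assumes "lam \<in> Lset n" "n \<ge> 1" "0 < D" "D < 1"
  shows "0 < t_wf n lam D" "D_wf n lam (t_wf n lam D) = D"
proof -
  let ?M = "Max (lam ` {1..n})"
  have "lam 1 \<le> ?M"
    using assms(2) by (intro Max_ge) auto
  moreover have "0 \<le> lam 1"
    using Lset_nonneg[OF assms(1), of 1] assms(2) by simp
  moreover have "D_wf n lam 0 = 0"
    using assms(1) by (simp add: D_wf_def Lset_def)
  moreover have "\<forall>x. 0 \<le> x \<and> x \<le> ?M \<longrightarrow> isCont (D_wf n lam) x"
    unfolding D_wf_def by (intro allI impI continuous_intros)
  ultimately obtain t where "0 \<le> t" "D_wf n lam t = D"
    using IVT[of "D_wf n lam" 0 D ?M] D_wf_eq_1[OF assms(1,2)] assms(3,4) by auto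
  moreover have "t \<noteq> 0"
    using calculation \<open>D_wf n lam 0 = 0\<close> assms(3) by auto
  ultimately have "0 < t" "t_wf n lam D = t"
    using t_wf_eqI[OF assms(1,2,4)] by auto
  then show "0 < t_wf n lam D" "D_wf n lam (t_wf n lam D) = D"
    using \<open>D_wf n lam t = D\<close> by simp_all
qed

lemma D_rc_strict_antimono:
  assumes "lam \<in> Lset n" "n \<ge> 1" "0 < T" "T < T'"
  shows "D_rc n lam T' < D_rc n lam T"
proof -
  obtain i0 where i0: "i0 \<in> {1..n}" "0 < lam i0"
    using Lset_ex_pos[OF assms(1,2)] .
  have term_mono: "lam i / (1 + lam i * T') \<le> lam i / (1 + lam i * T)" if "0 \<le> lam i" for i
  proof -
    have "lam i * T \<le> lam i * T'" "0 < 1 + lam i * T"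
      using that assms(3,4) by (simp_all add: mult_left_mono add_pos_nonneg)
    then show ?thesis
      using that by (intro divide_left_mono) auto
  qed
  have "lam i0 * T < lam i0 * T'" "0 < 1 + lam i0 * T" "0 < 1 + lam i0 * T'"
    using i0(2) assms(3,4) by (simp_all add: add_pos_nonneg)
  then have "lam i0 / (1 + lam i0 * T') < lam i0 / (1 + lam i0 * T)"
    using i0(2) by (intro divide_strict_left_mono) simp_all
  then have "(\<Sum>i=1..n. lam i / (1 + lam i * T')) < (\<Sum>i=1..n. lam i / (1 + lam i * T))"
    using i0(1) term_mono Lset_nonneg[OF assms(1)] by (intro sum_strict_mono_ex1) auto
  then show ?thesis
    using assms(2) by (simp add: D_rc_def divide_strict_right_mono)
qed

lemma T_rc_eqI:
  assumes "lam \<in> Lset n" "n \<ge> 1" "0 < T" "D_rc n lam T = D"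
  shows "T_rc n lam D = T"
  unfolding T_rc_def
proof (rule the_equality)
  fix T' assume T': "0 < T' \<and> D_rc n lam T' = D"
  show "T' = T"
    using D_rc_strict_antimono[OF assms(1,2), of T T'] D_rc_strict_antimono[OF assms(1,2), of T' T]
      T' assms(3,4) by (cases T T' rule: linorder_cases) auto
qed (use assms in auto)

text \<open>The bracket for the intermediate value theorem: at \<open>T = (1 - D) / (n D)\<close> every term
  \<open>lam i / (1 + lam i T)\<close> is at least \<open>lam i / (1 + n T)\<close> since \<open>lam i \<le> n\<close>, and at
  \<open>T = 1 / D\<close> every term is at most \<open>D\<close>.\<close>
lemma T_rc_spec:
  assumes "lam \<in> Lset n" "n \<ge> 1" "0 < D" "D < 1"
  shows "0 < T_rc n lam D" "D_rc n lam (T_rc n lam D) = D"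
proof -
  define T1 where "T1 = (1 - D) / (real n * D)"
  define T2 where "T2 = 1 / D"
  have T1_pos: "0 < T1" using assms by (simp add: T1_def)
  have "T1 \<le> real n / (real n * D)"
    unfolding T1_def using assms by (intro divide_right_mono) auto
  then have "T1 \<le> T2"
    using assms(2) by (simp add: T2_def)
  have "lam i / (1 + real n * T1) \<le> lam i / (1 + lam i * T1)" if "i \<in> {1..n}" for i
    using Lset_nonneg[OF assms(1) that] Lset_le[OF assms(1) that] T1_pos
    by (intro divide_left_mono mult_right_mono add_pos_nonneg mult_pos_pos) auto
  then have "(\<Sum>i=1..n. lam i) / (1 + real n * T1) \<le> (\<Sum>i=1..n. lam i / (1 + lam i * T1))"
    unfolding sum_divide_distrib by (intro sum_mono) simp
  moreover have "(\<Sum>i=1..n. lam i) / (1 + real n * T1) = real n * D"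
    using assms by (simp add: T1_def Lset_def field_simps)
  ultimately have "D \<le> D_rc n lam T1"
    using assms(2) by (simp add: D_rc_def field_simps)
  moreover have "D_rc n lam T2 \<le> D"
  proof -
    have "lam i / (1 + lam i * T2) \<le> D" if "i \<in> {1..n}" for i
    proof -
      have "D * lam i \<le> D * (D + lam i)"
        using Lset_nonneg[OF assms(1) that] assms(3) by (intro mult_left_mono) auto
      then show ?thesis
        using Lset_nonneg[OF assms(1) that] assms(3) by (simp add: T2_def field_simps)
    qed
    then have "(\<Sum>i=1..n. lam i / (1 + lam i * T2)) \<le> real n * D"
      using sum_mono[of "{1..n}" _ "\<lambda>_. D"] by simp
    then show ?thesis
      using assms(2) by (simp add: D_rc_def field_simps)
  qed
  moreover have "\<forall>x. T1 \<le> x \<and> x \<le> T2 \<longrightarrow> isCont (D_rc n lam) x"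
  proof (intro allI impI)
    fix x assume "T1 \<le> x \<and> x \<le> T2"
    then have "0 \<le> lam i * x" if "i \<in> {1..n}" for i
      using Lset_nonneg[OF assms(1) that] T1_pos by simp
    then have "1 + lam i * x \<noteq> 0" if "i \<in> {1..n}" for i
      using that by force
    then show "isCont (D_rc n lam) x"
      unfolding D_rc_def using assms(2) by (auto intro!: continuous_intros)
  qed
  ultimately obtain T where "T1 \<le> T" "D_rc n lam T = D"
    using IVT2[of "D_rc n lam" T2 D T1] \<open>T1 \<le> T2\<close> by auto
  moreover from this have "T_rc n lam D = T"
    using T_rc_eqI[OF assms(1,2)] T1_pos by simp
  ultimately show "0 < T_rc n lam D" "D_rc n lam (T_rc n lam D) = D"
    using T1_pos by simp_all
qed

lemma D_wf_flatten_on: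
  assumes "S \<subseteq> {1..n}" "\<And>i. i \<in> S \<Longrightarrow> lam i \<le> t"
  shows "D_wf n (flatten_on S lam) t = D_wf n lam t"
proof -
  have "mean_on S lam \<le> t" if "S \<noteq> {}"
    using that assms finite_subset[OF assms(1)] by (intro mean_on_le) auto
  then have "min (mean_on S lam) t + 1 * (lam i - mean_on S lam) - min (lam i) t = 0" if "i \<in> S" for i
    using that assms(2) by force
  then have "(\<Sum>i=1..n. min (flatten_on S lam i) t) - (\<Sum>i=1..n. min (lam i) t) = 0"
    using sum_flatten_on_diff[OF _ assms(1), of "\<lambda>y. min y t" lam 1] by simp
  then show ?thesis by (simp add: D_wf_def)
qed

lemma max_zero_log_eq_0:
  fixes y t :: real
  assumes "0 \<le> y" "y \<le> t"
  shows "max 0 (log 2 (y / t)) = 0"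
proof (cases "y = 0")
  case False
  then have "0 < y / t" "y / t \<le> 1"
    using assms by auto
  then show ?thesis by simp
qed (simp add: log_def)

lemma R_wf_flatten_on:
  assumes "S \<subseteq> {1..n}" "\<And>i. i \<in> S \<Longrightarrow> 0 \<le> lam i \<and> lam i \<le> t"
  shows "R_wf n (flatten_on S lam) t = R_wf n lam t"
proof -
  let ?f = "\<lambda>y. max 0 (log 2 (y / t))"
  have "0 \<le> mean_on S lam" "mean_on S lam \<le> t" if "S \<noteq> {}"
    using that assms finite_subset[OF assms(1)] by (auto intro: mean_on_ge mean_on_le)
  then have "?f (mean_on S lam) + 0 * (lam i - mean_on S lam) - ?f (lam i) = 0" if "i \<in> S" for i
    using that assms(2) max_zero_log_eq_0 by auto
  then have "(\<Sum>i=1..n. ?f (flatten_on S lam i)) - (\<Sum>i=1..n. ?f (lam i)) = 0"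
    using sum_flatten_on_diff[OF _ assms(1), of ?f lam 0] by simp
  then show ?thesis by (simp add: R_wf_def)
qed

lemma D_rc_le_flatten_on:
  assumes "S \<subseteq> {1..n}" "\<And>i. i \<in> {1..n} \<Longrightarrow> 0 \<le> lam i" "0 < T"
  shows "D_rc n lam T \<le> D_rc n (flatten_on S lam) T"
proof -
  let ?f = "\<lambda>y. y / (1 + y * T)" and ?m = "mean_on S lam"
  have "0 \<le> ?f ?m + 1 / (1 + ?m * T)\<^sup>2 * (lam i - ?m) - ?f (lam i)" if "i \<in> S" for i
  proof -
    have "0 \<le> ?m"
      using that assms(1,2) finite_subset[OF assms(1)] by (intro mean_on_ge) auto
    then show ?thesis
      using frac_le_tangent[of "lam i" ?m T] that assms by auto
  qed
  then have "0 \<le> (\<Sum>i=1..n. ?f (flatten_on S lam i)) - (\<Sum>i=1..n. ?f (lam i))"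
    using sum_flatten_on_diff[OF _ assms(1), of ?f lam "1 / (1 + ?m * T)\<^sup>2"] by (simp add: sum_nonneg)
  then show ?thesis
    by (simp add: D_rc_def divide_right_mono)
qed

lemma R_rc_less_flatten_on:
  assumes "S \<subseteq> {1..n}" "\<And>i. i \<in> {1..n} \<Longrightarrow> 0 \<le> lam i" "0 < T"
    and "i \<in> S" "j \<in> S" "lam i \<noteq> lam j"
  shows "R_rc n lam T < R_rc n (flatten_on S lam) T"
proof -
  let ?f = "\<lambda>y. log 2 (1 + y * T)" and ?m = "mean_on S lam"
  let ?gap = "\<lambda>i. ?f ?m + T / ((1 + ?m * T) * ln 2) * (lam i - ?m) - ?f (lam i)"
  have "0 \<le> ?m"
    using assms finite_subset[OF assms(1)] by (intro mean_on_ge) auto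
  obtain i0 where "i0 \<in> S" "lam i0 \<noteq> ?m"
    using assms(4-6) by metis
  then have "0 < ?gap i0"
    using log_less_tangent[of "lam i0" ?m T] \<open>0 \<le> ?m\<close> assms(1-3) by auto
  moreover have "0 \<le> ?gap i" if "i \<in> S" for i
    using log_le_tangent[of "lam i" ?m T] \<open>0 \<le> ?m\<close> that assms(1-3) by auto
  moreover have "finite S"
    using finite_subset[OF assms(1)] by simp
  ultimately have "(\<Sum>i\<in>S. 0) < (\<Sum>i\<in>S. ?gap i)"
    using \<open>i0 \<in> S\<close> by (intro sum_strict_mono_ex1) auto
  then have "(\<Sum>i=1..n. ?f (lam i)) < (\<Sum>i=1..n. ?f (flatten_on S lam i))"
    using sum_flatten_on_diff[OF _ assms(1), of ?f lam "T / ((1 + ?m * T) * ln 2)"] by simp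
  moreover have "0 < n"
    using assms(1,4) by auto
  ultimately show ?thesis
    by (simp add: R_rc_def divide_strict_right_mono)
qed

lemma R_rc_mono:
  assumes "\<And>i. i \<in> {1..n} \<Longrightarrow> 0 \<le> lam i" "0 < T" "T \<le> T'"
  shows "R_rc n lam T \<le> R_rc n lam T'"
proof -
  have "log 2 (1 + lam i * T) \<le> log 2 (1 + lam i * T')" if "i \<in> {1..n}" for i
    using assms(1)[OF that] assms(2,3) by (simp add: mult_left_mono add_pos_nonneg)
  then have "(\<Sum>i=1..n. log 2 (1 + lam i * T)) \<le> (\<Sum>i=1..n. log 2 (1 + lam i * T'))"
    by (rule sum_mono)
  then show ?thesis
    by (simp add: R_rc_def divide_right_mono)
qed

lemma RR_rc_less_flatten_on:
  assumes "lam \<in> Lset n" "n \<ge> 1" "0 < D" "D < 1" "S \<subseteq> {1..n}"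
    and "i \<in> S" "j \<in> S" "lam i \<noteq> lam j"
  shows "RR_rc n lam D < RR_rc n (flatten_on S lam) D"
proof -
  let ?lam' = "flatten_on S lam"
  let ?T = "T_rc n lam D" and ?T' = "T_rc n ?lam' D"
  have L': "?lam' \<in> Lset n"
    using flatten_on_Lset[OF assms(1,5)] .
  note T = T_rc_spec[OF assms(1-4)] and T' = T_rc_spec[OF L' assms(2-4)]
  have "D \<le> D_rc n ?lam' ?T"
    using D_rc_le_flatten_on[where lam = lam, OF assms(5) Lset_nonneg[OF assms(1)] T(1)] T(2) by simp
  then have "?T \<le> ?T'"
    using D_rc_strict_antimono[OF L' assms(2) T'(1), of ?T] T'(2) by force
  have "R_rc n lam ?T < R_rc n ?lam' ?T"
    using R_rc_less_flatten_on[where lam = lam, OF assms(5) Lset_nonneg[OF assms(1)] T(1) assms(6-8)] .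
  also have "\<dots> \<le> R_rc n ?lam' ?T'"
    using R_rc_mono[where lam = ?lam', OF Lset_nonneg[OF L'] T(1) \<open>?T \<le> ?T'\<close>] .
  finally show ?thesis
    by (simp add: RR_rc_def)
qed

lemma t_wf_flatten_on:
  assumes "lam \<in> Lset n" "n \<ge> 1" "0 < D" "D < 1" "S \<subseteq> {1..n}"
    and "\<And>i. i \<in> S \<Longrightarrow> lam i \<le> t_wf n lam D"
  shows "t_wf n (flatten_on S lam) D = t_wf n lam D"
  using t_wf_eqI[OF flatten_on_Lset[OF assms(1,5)] assms(2,4)] t_wf_spec[OF assms(1-4)]
    D_wf_flatten_on[OF assms(5,6)] by simp

lemma RR_wf_flatten_on:
  assumes "lam \<in> Lset n" "n \<ge> 1" "0 < D" "D < 1" "S \<subseteq> {1..n}"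
    and "\<And>i. i \<in> S \<Longrightarrow> lam i \<le> t_wf n lam D"
  shows "RR_wf n (flatten_on S lam) D = RR_wf n lam D"
proof -
  have "R_wf n (flatten_on S lam) (t_wf n lam D) = R_wf n lam (t_wf n lam D)"
    using assms(5,6) Lset_nonneg[OF assms(1)] by (intro R_wf_flatten_on) auto
  then show ?thesis
    using t_wf_flatten_on[OF assms] by (simp add: RR_wf_def)
qed

lemma Gobj_less_flatten_on:
  assumes "lam \<in> Lset n" "n \<ge> 1" "0 < D" "D < 1" "S \<subseteq> {1..n}"
    and "\<And>i. i \<in> S \<Longrightarrow> lam i \<le> t_wf n lam D"
    and "i \<in> S" "j \<in> S" "lam i \<noteq> lam j"
  shows "Gobj n D lam < Gobj n D (flatten_on S lam)"
  using RR_rc_less_flatten_on[OF assms(1-5,7-9)] RR_wf_flatten_on[OF assms(1-6)]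
  by (simp add: Gobj_def)

lemma flatten_on_tail_mem_Fset:
  assumes "lam \<in> Fset n k D rho" "n \<ge> 1" "0 < D" "D < 1" "0 \<le> rho"
  shows "flatten_on {k+1..n} lam \<in> Fset n k D rho"
proof -
  let ?S = "{k+1..n}" and ?t = "t_wf n lam D"
  have L: "lam \<in> Lset n"
    and head: "\<And>i. i \<in> {1..k} \<Longrightarrow> ?t + rho \<le> lam i"
    and tail: "\<And>i. i \<in> ?S \<Longrightarrow> 0 \<le> lam i \<and> lam i \<le> ?t - rho"
    using assms(1) by (auto simp: Fset_def)
  have t': "t_wf n (flatten_on ?S lam) D = ?t"
    using tail assms(5) by (intro t_wf_flatten_on[OF L assms(2-4)]) force+
  have "0 \<le> mean_on ?S lam" "mean_on ?S lam \<le> ?t - rho" if "?S \<noteq> {}"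
    using that tail by (auto intro: mean_on_ge mean_on_le)
  then show ?thesis
    using flatten_on_Lset[OF L] head tail t' by (auto simp: Fset_def flatten_on_def)
qed

theorem claimD2:
  fixes n k :: nat and Ds eps :: real and lamS :: "nat \<Rightarrow> real"
  assumes "n \<ge> 1" and "k \<le> n"
    and "0 < Ds" and "Ds < 1"
    and "0 < eps" and "eps < Ds"
    and "lamS \<in> Fset n k Ds (eps * (Ds - eps) / (2 * real n))"
    and "\<forall>lam \<in> Fset n k Ds (eps * (Ds - eps) / (2 * real n)). Gobj n Ds lam \<le> Gobj n Ds lamS"
  shows "\<forall>i\<in>{k+1..n}. \<forall>j\<in>{k+1..n}. lamS i = lamS j"
proof (rule ccontr)
  define rho where "rho = eps * (Ds - eps) / (2 * real n)"
  let ?S = "{k+1..n}"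
  assume "\<not> ?thesis"
  then obtain i j where ij: "i \<in> ?S" "j \<in> ?S" "lamS i \<noteq> lamS j"
    by blast
  have "0 \<le> rho"
    using assms(5,6) by (simp add: rho_def)
  have "lamS \<in> Lset n" "\<And>i. i \<in> ?S \<Longrightarrow> lamS i \<le> t_wf n lamS Ds"
    using assms(7) \<open>0 \<le> rho\<close> by (force simp: Fset_def rho_def)+
  then have "Gobj n Ds lamS < Gobj n Ds (flatten_on ?S lamS)"
    using Gobj_less_flatten_on[OF _ assms(1,3,4) _ _ ij] by auto
  moreover have "flatten_on ?S lamS \<in> Fset n k Ds rho"
    using flatten_on_tail_mem_Fset assms(1,3,4,7) \<open>0 \<le> rho\<close> by (simp add: rho_def)
  ultimately show False
    using assms(8) by (force simp: rho_def)
qed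

end
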